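(* Let $\psi^\infty:[0,\infty)\to X$ be a bounded, differentiable solution of the conventional adjoint equation $$\frac{d\psi^\infty}{dt} + f_u^*(t)\,\psi^\infty + J_u(t) = 0,$$ which moreover satisfies $\lim_{T\to\infty}\frac{1}{T}\int_0^T \psi^\infty(t)^T f(t)\,dt = 0$. Then $$\psi^\infty(t)^T f(t) = \bar J - J(t)\qquad\text{for all } t\ge 0 .$$
   Context: Let $X=\mathbb{R}^n$ with inner product $x^Ty$. Let $f:X\times\mathbb{R}\to X$ be $C^2$, fix the parameter $s\in\mathbb{R}$, and let $u(t)$, $t\ge 0$, solve $\frac{du}{dt}=f(u,s)$. Write $f(t)=f(u(t),s)$, let $f_u(t)$ be the Jacobian $\partial f/\partial u$ at $(u(t),s)$, and let $f_u^*(t)=f_u(t)^T$. Let $J:X\times\mathbb{R}\to\mathbb{R}$ be smooth, with $J(t)=J(u(t),s)$ and $J_u(t)$ the gradient of $J$ with respect to $u$ at $(u(t),s)$, written as a column vector. Let $\bar J=\lim_{T\to\infty}\frac1T\int_0^T J(t)\,dt$, assumed to exist. *)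

theory Defs
  imports "HOL-Analysis.Analysis"
begin

fun dderiv :: "('a::real_normed_vector \<Rightarrow> 'b::real_normed_vector) \<Rightarrow> 'a list \<Rightarrow> 'a \<Rightarrow> 'b" where
  "dderiv g [] = g"
| "dderiv g (v # vs) = (\<lambda>x. frechet_derivative (dderiv g vs) (at x) v)"

definition Ck :: "nat \<Rightarrow> ('a::real_normed_vector \<Rightarrow> 'b::real_normed_vector) \<Rightarrow> bool" where
  "Ck k g \<longleftrightarrow> (\<forall>vs. length vs < k \<longrightarrow> (\<forall>x. dderiv g vs differentiable (at x)))
             \<and> (\<forall>vs. length vs \<le> k \<longrightarrow> continuous_on UNIV (dderiv g vs))"

definition smooth_map :: "('a::real_normed_vector \<Rightarrow> 'b::real_normed_vector) \<Rightarrow> bool" where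
  "smooth_map g \<longleftrightarrow> (\<forall>k. Ck k g)"

definition gradient :: "(real^'n \<Rightarrow> real) \<Rightarrow> real^'n \<Rightarrow> real^'n" where
  "gradient g x = (\<chi> i. frechet_derivative g (at x) (axis i 1))"

end

theory Submission
  imports Defs
begin

text \<open>The quantity \<open>\<psi> \<bullet> f + J\<close> is conserved along the trajectory: its derivative
  \<open>\<psi>' \<bullet> f + \<psi> \<bullet> f\<^sub>u f + J\<^sub>u \<bullet> f\<close> vanishes by the adjoint equation, because
  \<open>\<psi> \<bullet> f\<^sub>u f = f\<^sub>u\<^sup>* \<psi> \<bullet> f\<close>. Averaging this constant over \<open>[0, T]\<close> and letting
  \<open>T \<rightarrow> \<infinity>\<close> identifies it with \<open>0 + Jbar\<close>.\<close>

lemma Ck_imp_differentiable: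
  assumes "Ck k g" "0 < k"
  shows "g differentiable (at x)"
  using assms unfolding Ck_def by (metis dderiv.simps(1) list.size(3))

lemma smooth_map_imp_differentiable:
  assumes "smooth_map g"
  shows "g differentiable (at x)"
  using assms Ck_imp_differentiable[of 1 g] unfolding smooth_map_def by simp

lemma differentiable_section:
  fixes G :: "'a::real_normed_vector \<times> 'b::real_normed_vector \<Rightarrow> 'c::real_normed_vector"
  assumes "\<And>z. G differentiable (at z)"
  shows "(\<lambda>v. G (v, s)) differentiable (at v)"
proof -
  have "(\<lambda>v. (v, s)) differentiable (at v)"
    by (auto intro!: derivative_eq_intros simp: differentiable_def)
  then show ?thesis
    using assms differentiable_chain_at[of "\<lambda>v. (v, s)" v G] by (simp add: o_def)
qed

lemma continuous_on_compose_everywhere_differentiable: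
  assumes "\<And>z. G differentiable (at z)" and "continuous_on S v"
  shows "continuous_on S (\<lambda>t. G (v t))"
proof (rule continuous_on_compose2[OF _ assms(2)])
  show "continuous_on UNIV G"
    using assms(1)
    by (simp add: differentiable_at_imp_differentiable_on differentiable_imp_continuous_on)
qed simp

lemma inner_gradient:
  assumes "g differentiable (at x)"
  shows "gradient g x \<bullet> w = frechet_derivative g (at x) w"
proof -
  let ?D = "frechet_derivative g (at x)"
  have "linear ?D"
    using assms frechet_derivative_works has_derivative_linear by blast
  have "?D w = ?D (\<Sum>i\<in>UNIV. w$i *\<^sub>R axis i 1)"
    by (simp add: basis_expansion flip: scalar_mult_eq_scaleR)
  also have "\<dots> = (\<Sum>i\<in>UNIV. w$i * ?D (axis i 1))"
    using \<open>linear ?D\<close> by (simp add: linear_sum linear_scale)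
  finally show ?thesis
    by (simp add: gradient_def inner_vec_def mult.commute)
qed

lemma adjoint_inner_plus_has_derivative_zero:
  fixes f :: "real^'n \<Rightarrow> real^'n" and j :: "real^'n \<Rightarrow> real"
    and u \<psi> :: "real \<Rightarrow> real^'n"
  assumes f_diff: "f differentiable (at (u t))" and j_diff: "j differentiable (at (u t))"
    and u_ode: "(u has_vector_derivative f (u t)) (at t within S)"
    and \<psi>_deriv: "(\<psi> has_vector_derivative \<psi>') (at t within S)"
    and adjoint: "\<psi>' + transpose (jacobian f (at (u t))) *v \<psi> t + gradient j (u t) = 0"
  shows "((\<lambda>t. \<psi> t \<bullet> f (u t) + j (u t)) has_real_derivative 0) (at t within S)"
proof -
  let ?A = "jacobian f (at (u t))" and ?Dj = "frechet_derivative j (at (u t))"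
  have "(f has_derivative (\<lambda>h. ?A *v h)) (at (u t) within u ` S)"
    using f_diff jacobian_works has_derivative_at_withinI by blast
  then have df: "((\<lambda>t. f (u t)) has_vector_derivative ?A *v f (u t)) (at t within S)"
    using vector_derivative_diff_chain_within[OF u_ode] by (simp add: o_def)
  have "(j has_derivative ?Dj) (at (u t) within u ` S)"
    using j_diff frechet_derivative_works has_derivative_at_withinI by blast
  then have dj: "((\<lambda>t. j (u t)) has_vector_derivative ?Dj (f (u t))) (at t within S)"
    using vector_derivative_diff_chain_within[OF u_ode] by (simp add: o_def)
  have "((\<lambda>t. \<psi> t \<bullet> f (u t) + j (u t)) has_vector_derivative
      \<psi> t \<bullet> (?A *v f (u t)) + \<psi>' \<bullet> f (u t) + ?Dj (f (u t))) (at t within S)"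
    by (intro has_vector_derivative_add dj
        bounded_bilinear.has_vector_derivative[OF bounded_bilinear_inner \<psi>_deriv df])
  moreover have "\<psi> t \<bullet> (?A *v f (u t)) + \<psi>' \<bullet> f (u t) + ?Dj (f (u t)) = 0"
  proof -
    have "\<psi>' = - (transpose ?A *v \<psi> t) - gradient j (u t)"
      using adjoint by (simp add: algebra_simps eq_neg_iff_add_eq_0)
    then show ?thesis
      by (simp add: inner_diff_left inner_gradient[OF j_diff] dot_lmul_matrix)
  qed
  ultimately show ?thesis
    by (simp add: has_real_derivative_iff_has_vector_derivative)
qed

lemma eq_add_of_time_average_limits:
  fixes g h :: "real \<Rightarrow> real"
  assumes "continuous_on {0..} g" "continuous_on {0..} h"
    and sum_const: "\<And>t. t \<ge> 0 \<Longrightarrow> g t + h t = c"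
    and g_avg: "((\<lambda>T. (1 / T) * integral {0..T} g) \<longlongrightarrow> a) at_top"
    and h_avg: "((\<lambda>T. (1 / T) * integral {0..T} h) \<longlongrightarrow> b) at_top"
  shows "c = a + b"
proof -
  have "\<forall>\<^sub>F T in at_top. (1 / T) * integral {0..T} g + (1 / T) * integral {0..T} h = c"
    using eventually_gt_at_top[of "0::real"]
  proof eventually_elim
    case (elim T)
    have "g integrable_on {0..T}" "h integrable_on {0..T}"
      using assms(1,2) by (auto intro!: integrable_continuous_interval elim!: continuous_on_subset)
    then have "integral {0..T} g + integral {0..T} h = integral {0..T} (\<lambda>t. g t + h t)"
      by (rule integral_add[symmetric])
    also have "\<dots> = integral {0..T} (\<lambda>t. c)"
      by (rule integral_cong) (simp add: sum_const)
    finally show ?case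
      using elim by (simp add: field_simps)
  qed
  then have "((\<lambda>T::real. c) \<longlongrightarrow> a + b) at_top"
    by (rule Lim_transform_eventually[OF tendsto_add[OF g_avg h_avg]])
  then show ?thesis
    by (simp add: tendsto_const_iff[OF trivial_limit_at_top_linorder])
qed

theorem mainTheorem1:
  fixes F :: "(real^'n) \<times> real \<Rightarrow> real^'n"
    and J :: "(real^'n) \<times> real \<Rightarrow> real"
    and s :: real
    and u :: "real \<Rightarrow> real^'n"
    and Jbar :: real
    and \<psi> \<psi>' :: "real \<Rightarrow> real^'n"
  assumes F_C2: "Ck 2 F"
    and J_smooth: "smooth_map J"
    and u_ode: "\<And>t. t \<ge> 0 \<Longrightarrow> (u has_vector_derivative F (u t, s)) (at t within {0..})"
    and Jbar_lim: "((\<lambda>T. (1 / T) * integral {0..T} (\<lambda>t. J (u t, s))) \<longlongrightarrow> Jbar) at_top"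
    and \<psi>_bounded: "bounded (\<psi> ` {0..})"
    and \<psi>_deriv: "\<And>t. t \<ge> 0 \<Longrightarrow> (\<psi> has_vector_derivative \<psi>' t) (at t within {0..})"
    and \<psi>_adjoint: "\<And>t. t \<ge> 0 \<Longrightarrow>
        \<psi>' t + transpose (jacobian (\<lambda>v. F (v, s)) (at (u t))) *v \<psi> t
             + gradient (\<lambda>v. J (v, s)) (u t) = 0"
    and \<psi>_avg: "((\<lambda>T. (1 / T) * integral {0..T} (\<lambda>t. \<psi> t \<bullet> F (u t, s))) \<longlongrightarrow> 0) at_top"
  shows "\<forall>t\<ge>0. \<psi> t \<bullet> F (u t, s) = Jbar - J (u t, s)"
proof -
  have F_diff: "F differentiable (at z)" for z
    using Ck_imp_differentiable[OF F_C2] by simp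
  have J_diff: "J differentiable (at z)" for z
    using smooth_map_imp_differentiable[OF J_smooth] .
  have "((\<lambda>t. \<psi> t \<bullet> F (u t, s) + J (u t, s)) has_real_derivative 0) (at t within {0..})"
    if "t \<in> {0..}" for t
    using that by (intro adjoint_inner_plus_has_derivative_zero[where \<psi>'="\<psi>' t"]
        differentiable_section F_diff J_diff u_ode \<psi>_deriv \<psi>_adjoint) simp_all
  then obtain c where "\<forall>t\<in>{0..}. \<psi> t \<bullet> F (u t, s) + J (u t, s) = c"
    using has_field_derivative_zero_constant[OF convex_real_interval(1)] by blast
  then have c: "\<And>t. t \<ge> 0 \<Longrightarrow> \<psi> t \<bullet> F (u t, s) + J (u t, s) = c"
    by simp
  have "continuous_on {0..} u" and \<psi>_cont: "continuous_on {0..} \<psi>"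
    by (auto simp: continuous_on_eq_continuous_within
        intro: has_vector_derivative_continuous[OF u_ode]
          has_vector_derivative_continuous[OF \<psi>_deriv])
  then have u_cont: "continuous_on {0..} (\<lambda>t. (u t, s))"
    by (intro continuous_intros)
  have "continuous_on {0..} (\<lambda>t. \<psi> t \<bullet> F (u t, s))"
    using \<psi>_cont continuous_on_compose_everywhere_differentiable[OF F_diff u_cont]
    by (rule continuous_on_inner)
  moreover have "continuous_on {0..} (\<lambda>t. J (u t, s))"
    by (rule continuous_on_compose_everywhere_differentiable[OF J_diff u_cont])
  ultimately have "c = 0 + Jbar"
    using eq_add_of_time_average_limits[OF _ _ c \<psi>_avg Jbar_lim] by simp
  then show ?thesis
    using c by (simp add: algebra_simps)
qed

end
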